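(* Let $\mathcal{G}$ be an MVPP optional-grabbing pawn game with pawns $[d]$, let $v\in V$ with $v\in V_j$, let $P\subseteq[d]$, and let $j'\in[d]$ with $j'\neq j$. If Player 1 wins from $\langle v,P\cup\{j'\}\rangle$, then Player 1 wins from $\langle v,P\rangle$. Dually, if Player 2 wins from $\langle v,P\setminus\{j'\}\rangle$, then Player 2 wins from $\langle v,P\rangle$. (In words: when a player has the option to grab after the opponent moves the token to $v$, grabbing a pawn other than the one owning $v$ is never better than not grabbing.)
   Context: A pawn game with $d$ pawns consists of a finite directed graph $(V,E)$, a target set $T\subseteq V$, and sets $V_1,\dots,V_d$ partitioning $V$ (MVPP), where Pawn $j$ owns the vertices in $V_j$. A configuration is $\langle v,P\rangle$: token on $v$, Player 1 controls pawns $P\subseteq[d]$, Player 2 controls the rest. At $\langle v,P\rangle$, Player 1 moves the token along an edge iff he controls the pawn owning $v$; otherwise Player 2 moves. Under optional grabbing, after Player $i$ moves, the other player may either leave pawn control unchanged or take one pawn currently controlled by Player $i$. Player 1 wins a play iff it visits $T$, otherwise Player 2 wins; winning from a configuration means having a strategy that wins against all opponent strategies. *)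

theory Defs
  imports Main
begin

text \<open>Pawns are the numbers 1..d. The partition V_1,...,V_d (MVPP) is given by an
  ownership function own: vertex x belongs to V_(own x).\<close>

definition pawn_game :: "'v set \<Rightarrow> ('v \<times> 'v) set \<Rightarrow> 'v set \<Rightarrow> nat \<Rightarrow> ('v \<Rightarrow> nat) \<Rightarrow> bool" where
  "pawn_game V E T d own \<longleftrightarrow>
     finite V \<and> E \<subseteq> V \<times> V \<and> T \<subseteq> V \<and>
     (\<forall>x\<in>V. own x \<in> {1..d}) \<and>
     (\<forall>x\<in>V. \<exists>y. (x, y) \<in> E)"

datatype player = Pl1 | Pl2

text \<open>Positions of the optional-grabbing game: a configuration \<open>Conf v P\<close> (token on v,
  Player 1 controls pawns P), or an intermediate position \<open>Grab u P i\<close> reached right after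
  player i moved the token to u, where the other player decides whether to grab.\<close>
datatype 'v pos = Conf 'v "nat set" | Grab 'v "nat set" player

fun token :: "'v pos \<Rightarrow> 'v" where
  "token (Conf v P) = v"
| "token (Grab u P i) = u"

fun ctrl :: "('v \<Rightarrow> nat) \<Rightarrow> 'v pos \<Rightarrow> player" where
  "ctrl own (Conf v P) = (if own v \<in> P then Pl1 else Pl2)"
| "ctrl own (Grab u P Pl1) = Pl2"
| "ctrl own (Grab u P Pl2) = Pl1"

fun move :: "('v \<times> 'v) set \<Rightarrow> nat \<Rightarrow> ('v \<Rightarrow> nat) \<Rightarrow> 'v pos \<Rightarrow> 'v pos \<Rightarrow> bool" where
  "move E d own (Conf v P) y =
     (\<exists>u. (v, u) \<in> E \<and> y = Grab u P (if own v \<in> P then Pl1 else Pl2))"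
| "move E d own (Grab u P Pl1) y =
     (y = Conf u P \<or> (\<exists>k\<in>P. y = Conf u (P - {k})))"
| "move E d own (Grab u P Pl2) y =
     (y = Conf u P \<or> (\<exists>k\<in>{1..d} - P. y = Conf u (P \<union> {k})))"

type_synonym 'v strategy = "'v pos list \<Rightarrow> 'v pos"

definition legal_strategy :: "('v \<times> 'v) set \<Rightarrow> nat \<Rightarrow> ('v \<Rightarrow> nat) \<Rightarrow> player \<Rightarrow> 'v strategy \<Rightarrow> bool" where
  "legal_strategy E d own i \<sigma> \<longleftrightarrow>
     (\<forall>h. h \<noteq> [] \<longrightarrow> ctrl own (last h) = i \<longrightarrow>
        (\<exists>y. move E d own (last h) y) \<longrightarrow> move E d own (last h) (\<sigma> h))"

fun hist :: "('v \<Rightarrow> nat) \<Rightarrow> 'v strategy \<Rightarrow> 'v strategy \<Rightarrow> 'v pos \<Rightarrow> nat \<Rightarrow> 'v pos list" where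
  "hist own \<sigma> \<tau> s 0 = [s]"
| "hist own \<sigma> \<tau> s (Suc n) =
     (let h = hist own \<sigma> \<tau> s n in h @ [if ctrl own (last h) = Pl1 then \<sigma> h else \<tau> h])"

definition outcome :: "('v \<Rightarrow> nat) \<Rightarrow> 'v strategy \<Rightarrow> 'v strategy \<Rightarrow> 'v pos \<Rightarrow> nat \<Rightarrow> 'v pos" where
  "outcome own \<sigma> \<tau> s n = last (hist own \<sigma> \<tau> s n)"

definition visits :: "'v set \<Rightarrow> (nat \<Rightarrow> 'v pos) \<Rightarrow> bool" where
  "visits T \<rho> \<longleftrightarrow> (\<exists>n. token (\<rho> n) \<in> T)"

definition wins1 :: "('v \<times> 'v) set \<Rightarrow> 'v set \<Rightarrow> nat \<Rightarrow> ('v \<Rightarrow> nat) \<Rightarrow> 'v pos \<Rightarrow> bool" where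
  "wins1 E T d own s \<longleftrightarrow>
     (\<exists>\<sigma>. legal_strategy E d own Pl1 \<sigma> \<and>
        (\<forall>\<tau>. legal_strategy E d own Pl2 \<tau> \<longrightarrow> visits T (outcome own \<sigma> \<tau> s)))"

definition wins2 :: "('v \<times> 'v) set \<Rightarrow> 'v set \<Rightarrow> nat \<Rightarrow> ('v \<Rightarrow> nat) \<Rightarrow> 'v pos \<Rightarrow> bool" where
  "wins2 E T d own s \<longleftrightarrow>
     (\<exists>\<tau>. legal_strategy E d own Pl2 \<tau> \<and>
        (\<forall>\<sigma>. legal_strategy E d own Pl1 \<sigma> \<longrightarrow> \<not> visits T (outcome own \<sigma> \<tau> s)))"

end

theory Submission
  imports Defs
begin

text \<open>Relate two positions if the
  second gives Player 1 at most one extra pawn \<open>x\<close> which, at configurations, does not own the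
  token; then the same player moves in both. The relation is preserved: token moves and grabs
  are copied, and when the token reaches a vertex owned by \<open>x\<close>, the player entitled to grab
  takes \<open>x\<close> in the game where \<open>x\<close> belongs to the other player, which makes the pawn sets equal.
  So the relation is an alternating simulation: Player 1 in the first game can shadow any
  strategy of Player 1 in the second, and Player 2 in the second game can shadow any strategy of
  Player 2 in the first, with identical token sequences. For Player 2, apply this to
  \<open>P - {j'}\<close> and \<open>P\<close>.\<close>

section \<open>Plays and strategies of turn-based games\<close>

fun opp :: "player \<Rightarrow> player" where
  "opp Pl1 = Pl2"
| "opp Pl2 = Pl1"

lemma opp_if_neq: "i \<noteq> p \<Longrightarrow> i = opp p"
  by (cases i; cases p) simp_all

definition profile :: "player \<Rightarrow> ('p list \<Rightarrow> 'p) \<Rightarrow> ('p list \<Rightarrow> 'p) \<Rightarrow> player \<Rightarrow> 'p list \<Rightarrow> 'p" where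
  "profile p \<sigma> \<tau> = (\<lambda>i. if i = p then \<sigma> else \<tau>)"

lemma profile_Pl2: "profile Pl2 \<tau> \<sigma> = profile Pl1 \<sigma> \<tau>"
proof
  fix i show "profile Pl2 \<tau> \<sigma> i = profile Pl1 \<sigma> \<tau> i"
    by (cases i) (simp_all add: profile_def)
qed

fun play :: "('p \<Rightarrow> player) \<Rightarrow> (player \<Rightarrow> 'p list \<Rightarrow> 'p) \<Rightarrow> 'p \<Rightarrow> nat \<Rightarrow> 'p list" where
  "play C \<Sigma> s 0 = [s]"
| "play C \<Sigma> s (Suc n) = (let h = play C \<Sigma> s n in h @ [\<Sigma> (C (last h)) h])"

lemma length_play: "length (play C \<Sigma> s n) = Suc n"
  by (induction n) (simp_all add: Let_def)

lemma play_ne: "play C \<Sigma> s n \<noteq> []"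
  using length_play[of C \<Sigma> s n] by auto

definition legal :: "('p \<Rightarrow> 'p \<Rightarrow> bool) \<Rightarrow> ('p \<Rightarrow> player) \<Rightarrow> player \<Rightarrow> ('p list \<Rightarrow> 'p) \<Rightarrow> bool" where
  "legal M C i \<sigma> \<longleftrightarrow>
     (\<forall>h. h \<noteq> [] \<longrightarrow> C (last h) = i \<longrightarrow> (\<exists>t. M (last h) t) \<longrightarrow> M (last h) (\<sigma> h))"

lemma legalD: "legal M C i \<sigma> \<Longrightarrow> h \<noteq> [] \<Longrightarrow> C (last h) = i \<Longrightarrow> \<exists>t. M (last h) t \<Longrightarrow> M (last h) (\<sigma> h)"
  unfolding legal_def by blast

definition legalize :: "('p \<Rightarrow> 'p \<Rightarrow> bool) \<Rightarrow> ('p list \<Rightarrow> 'p) \<Rightarrow> 'p list \<Rightarrow> 'p" where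
  "legalize M \<sigma> h = (if M (last h) (\<sigma> h) then \<sigma> h else (SOME t. M (last h) t))"

lemma legal_legalize: "legal M C i (legalize M \<sigma>)"
  unfolding legal_def legalize_def by (auto intro: someI_ex)

lemma legalize_eq: "M (last h) (\<sigma> h) \<Longrightarrow> legalize M \<sigma> h = \<sigma> h"
  unfolding legalize_def by simp

definition winning ::
  "('p \<Rightarrow> 'p \<Rightarrow> bool) \<Rightarrow> ('p \<Rightarrow> player) \<Rightarrow> player \<Rightarrow> ((nat \<Rightarrow> 'p) \<Rightarrow> bool) \<Rightarrow> 'p \<Rightarrow> bool" where
  "winning M C p W s \<longleftrightarrow> (\<exists>\<sigma>. legal M C p \<sigma> \<and>
     (\<forall>\<tau>. legal M C (opp p) \<tau> \<longrightarrow> W (\<lambda>n. last (play C (profile p \<sigma> \<tau>) s n))))"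

section \<open>Alternating simulations transfer winning strategies\<close>

lemma zip_tl_snoc: "h \<noteq> [] \<Longrightarrow> zip (h @ [x]) (tl h @ [x]) = zip h (tl h) @ [(last h, x)]"
  by (induction h rule: induct_list012) auto

text \<open>\<open>R s s'\<close> lets player \<open>p\<close> at \<open>s\<close> imitate player \<open>p\<close> at \<open>s'\<close>, while every opponent
  move at \<open>s\<close> can be answered at \<open>s'\<close>.\<close>

locale alternating_simulation =
  fixes M :: "'p \<Rightarrow> 'p \<Rightarrow> bool" and C :: "'p \<Rightarrow> player" and p :: player
    and R :: "'p \<Rightarrow> 'p \<Rightarrow> bool"
  assumes R_ctrl: "R s s' \<Longrightarrow> C s = C s'"
    and R_live: "R s s' \<Longrightarrow> (\<exists>t. M s t) \<and> (\<exists>t'. M s' t')"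
    and R_match_own: "R s s' \<Longrightarrow> C s = p \<Longrightarrow> M s' t' \<Longrightarrow> \<exists>t. M s t \<and> R t t'"
    and R_match_opp: "R s s' \<Longrightarrow> C s \<noteq> p \<Longrightarrow> M s t \<Longrightarrow> \<exists>t'. M s' t' \<and> R t t'"
begin

definition copy_own :: "'p \<Rightarrow> 'p \<Rightarrow> 'p" where
  "copy_own s t' = (SOME t. M s t \<and> R t t')"

definition copy_opp :: "'p \<Rightarrow> 'p \<Rightarrow> 'p \<Rightarrow> 'p" where
  "copy_opp s s' t = (SOME t'. M s' t' \<and> R t t')"

lemma copy_own: "R s s' \<Longrightarrow> C s = p \<Longrightarrow> M s' t' \<Longrightarrow> M s (copy_own s t') \<and> R (copy_own s t') t'"
  unfolding copy_own_def by (rule someI_ex) (rule R_match_own)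

lemma copy_opp:
  "R s s' \<Longrightarrow> C s \<noteq> p \<Longrightarrow> M s t \<Longrightarrow> M s' (copy_opp s s' t) \<and> R t (copy_opp s s' t)"
  unfolding copy_opp_def by (rule someI_ex) (rule R_match_opp)

text \<open>The history from \<open>s0'\<close> that shadows the history \<open>h\<close>: player \<open>p\<close> follows \<open>\<sigma>'\<close>, and each
  opponent move of \<open>h\<close> is answered by \<open>copy_opp\<close>.\<close>

definition shadow :: "'p \<Rightarrow> ('p list \<Rightarrow> 'p) \<Rightarrow> 'p list \<Rightarrow> 'p list" where
  "shadow s0' \<sigma>' h = foldl (\<lambda>h' (s, t). h' @ [if C s = p then \<sigma>' h' else copy_opp s (last h') t])
     [s0'] (zip h (tl h))"

lemma shadow_single: "shadow s0' \<sigma>' [s] = [s0']"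
  unfolding shadow_def by simp

lemma shadow_snoc: "h \<noteq> [] \<Longrightarrow> shadow s0' \<sigma>' (h @ [t]) = shadow s0' \<sigma>' h @
    [if C (last h) = p then \<sigma>' (shadow s0' \<sigma>' h) else copy_opp (last h) (last (shadow s0' \<sigma>' h)) t]"
  unfolding shadow_def by (simp add: zip_tl_snoc)

lemma length_shadow: "h \<noteq> [] \<Longrightarrow> length (shadow s0' \<sigma>' h) = length h"
proof (induction h rule: rev_induct)
  case (snoc t h)
  then show ?case by (cases "h = []") (simp_all add: shadow_snoc shadow_single)
qed simp

definition transfer_strategy :: "'p \<Rightarrow> ('p list \<Rightarrow> 'p) \<Rightarrow> 'p list \<Rightarrow> 'p" where
  "transfer_strategy s0' \<sigma>' = legalize M (\<lambda>h. copy_own (last h) (\<sigma>' (shadow s0' \<sigma>' h)))"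

lemma transfer_strategy_related:
  assumes "legal M C p \<sigma>'" and "h \<noteq> []" and R: "R (last h) (last (shadow s0' \<sigma>' h))"
    and "C (last h) = p"
  shows "R (transfer_strategy s0' \<sigma>' h) (\<sigma>' (shadow s0' \<sigma>' h))"
proof -
  have "shadow s0' \<sigma>' h \<noteq> []"
    using length_shadow[OF \<open>h \<noteq> []\<close>] \<open>h \<noteq> []\<close> by (metis length_0_conv)
  then have "M (last (shadow s0' \<sigma>' h)) (\<sigma>' (shadow s0' \<sigma>' h))"
    by (rule legalD[OF assms(1)]) (use assms(4) R_live[OF R] R_ctrl[OF R] in auto)
  with copy_own[OF R \<open>C (last h) = p\<close>] show ?thesis
    by (simp add: transfer_strategy_def legalize_eq)
qed

text \<open>The opponent strategy in the source game only has to be right on the shadows of the actual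
  play against \<open>\<tau>\<close>, and such a shadow is identified by its length.\<close>

definition source_opponent ::
  "'p \<Rightarrow> 'p \<Rightarrow> ('p list \<Rightarrow> 'p) \<Rightarrow> ('p list \<Rightarrow> 'p) \<Rightarrow> 'p list \<Rightarrow> 'p" where
  "source_opponent s0 s0' \<sigma>' \<tau> = legalize M (\<lambda>h'.
     last (shadow s0' \<sigma>' (play C (profile p (transfer_strategy s0' \<sigma>') \<tau>) s0 (length h'))))"

lemma play_shadow:
  assumes R0: "R s0 s0'" and \<sigma>': "legal M C p \<sigma>'" and \<tau>: "legal M C (opp p) \<tau>"
  defines "H \<equiv> play C (profile p (transfer_strategy s0' \<sigma>') \<tau>) s0"
  shows "play C (profile p \<sigma>' (source_opponent s0 s0' \<sigma>' \<tau>)) s0' n = shadow s0' \<sigma>' (H n)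
    \<and> R (last (H n)) (last (shadow s0' \<sigma>' (H n)))"
proof (induction n)
  case 0
  then show ?case using R0 by (simp add: H_def shadow_single)
next
  case (Suc n)
  define h' where "h' = shadow s0' \<sigma>' (H n)"
  define s s' where "s = last (H n)" and "s' = last h'"
  let ?\<tau>' = "source_opponent s0 s0' \<sigma>' \<tau>"
  have source: "play C (profile p \<sigma>' ?\<tau>') s0' n = h'" and R: "R s s'"
    using Suc by (simp_all add: h'_def s_def s'_def)
  have "H n \<noteq> []" by (simp add: H_def play_ne)
  have H_Suc: "H (Suc n) = H n @ [profile p (transfer_strategy s0' \<sigma>') \<tau> (C s) (H n)]"
    by (simp add: H_def s_def Let_def)
  have source_Suc: "play C (profile p \<sigma>' ?\<tau>') s0' (Suc n) = h' @ [profile p \<sigma>' ?\<tau>' (C s') h']"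
    using source by (simp add: s'_def Let_def)
  show ?case
  proof (cases "C s = p")
    case True
    have copy: "R (transfer_strategy s0' \<sigma>' (H n)) (\<sigma>' h')"
      using transfer_strategy_related[OF \<sigma>' \<open>H n \<noteq> []\<close>] R True by (simp add: h'_def s_def s'_def)
    have "shadow s0' \<sigma>' (H (Suc n)) = h' @ [\<sigma>' h']"
      using H_Suc True \<open>H n \<noteq> []\<close> by (simp add: profile_def shadow_snoc h'_def s_def)
    then show ?thesis using source_Suc H_Suc True R_ctrl[OF R] copy by (simp add: profile_def)
  next
    case False
    have "M (last (H n)) (\<tau> (H n))"
      by (rule legalD[OF \<tau> \<open>H n \<noteq> []\<close>]) (use R_live[OF R] opp_if_neq[OF False] in \<open>simp_all add: s_def\<close>)
    with copy_opp[OF R False] have copy: "M s' (copy_opp s s' (\<tau> (H n)))"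
      "R (\<tau> (H n)) (copy_opp s s' (\<tau> (H n)))"
      by (simp_all add: s_def)
    have H_Suc': "H (Suc n) = H n @ [\<tau> (H n)]"
      using H_Suc False by (simp add: profile_def)
    then have shadow_Suc: "shadow s0' \<sigma>' (H (Suc n)) = h' @ [copy_opp s s' (\<tau> (H n))]"
      using \<open>H n \<noteq> []\<close> False by (simp add: shadow_snoc h'_def s_def s'_def)
    moreover have "length h' = Suc n"
      using \<open>H n \<noteq> []\<close> by (simp add: h'_def length_shadow H_def length_play)
    then have "?\<tau>' h' = copy_opp s s' (\<tau> (H n))"
      using shadow_Suc copy by (simp add: source_opponent_def legalize_eq H_def s'_def)
    ultimately show ?thesis using source_Suc H_Suc' False R_ctrl[OF R] copy by (simp add: profile_def)
  qed
qed

theorem strategy_transfer: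
  assumes "R s0 s0'" and "legal M C p \<sigma>'"
  obtains \<sigma> where "legal M C p \<sigma>"
    and "\<And>\<tau>. legal M C (opp p) \<tau> \<Longrightarrow> \<exists>\<tau>'. legal M C (opp p) \<tau>' \<and>
           (\<forall>n. R (last (play C (profile p \<sigma> \<tau>) s0 n)) (last (play C (profile p \<sigma>' \<tau>') s0' n)))"
proof
  show "legal M C p (transfer_strategy s0' \<sigma>')"
    by (simp add: transfer_strategy_def legal_legalize)
  fix \<tau> assume "legal M C (opp p) \<tau>"
  with play_shadow[OF assms] show "\<exists>\<tau>'. legal M C (opp p) \<tau>' \<and>
      (\<forall>n. R (last (play C (profile p (transfer_strategy s0' \<sigma>') \<tau>) s0 n))
             (last (play C (profile p \<sigma>' \<tau>') s0' n)))"
    by (metis source_opponent_def legal_legalize)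
qed

theorem winning_transfer:
  assumes W: "\<And>\<rho> \<rho>'. \<forall>n. R (\<rho> n) (\<rho>' n) \<Longrightarrow> W \<rho>' \<Longrightarrow> W \<rho>"
    and "R s0 s0'" and "winning M C p W s0'"
  shows "winning M C p W s0"
proof -
  obtain \<sigma>' where "legal M C p \<sigma>'"
    and win: "\<And>\<tau>'. legal M C (opp p) \<tau>' \<Longrightarrow> W (\<lambda>n. last (play C (profile p \<sigma>' \<tau>') s0' n))"
    using assms(3) unfolding winning_def by blast
  then obtain \<sigma> where "legal M C p \<sigma>"
    and sim: "\<And>\<tau>. legal M C (opp p) \<tau> \<Longrightarrow> \<exists>\<tau>'. legal M C (opp p) \<tau>' \<and>
      (\<forall>n. R (last (play C (profile p \<sigma> \<tau>) s0 n)) (last (play C (profile p \<sigma>' \<tau>') s0' n)))"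
    using strategy_transfer[OF assms(2)] by blast
  have "W (\<lambda>n. last (play C (profile p \<sigma> \<tau>) s0 n))" if \<tau>: "legal M C (opp p) \<tau>" for \<tau>
  proof -
    obtain \<tau>' where \<tau>': "legal M C (opp p) \<tau>'"
      and "\<forall>n. R (last (play C (profile p \<sigma> \<tau>) s0 n)) (last (play C (profile p \<sigma>' \<tau>') s0' n))"
      using sim[OF \<tau>] by blast
    then show ?thesis by (intro W[OF _ win[OF \<tau>']]) simp
  qed
  with \<open>legal M C p \<sigma>\<close> show ?thesis unfolding winning_def by blast
qed

end

section \<open>Pawn games as turn-based games\<close>

lemma hist_eq_play: "hist own \<sigma> \<tau> s n = play (ctrl own) (profile Pl1 \<sigma> \<tau>) s n"
  by (induction n) (simp_all add: Let_def profile_def)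

lemma outcome_eq_play: "outcome own \<sigma> \<tau> s = (\<lambda>n. last (play (ctrl own) (profile Pl1 \<sigma> \<tau>) s n))"
  by (simp add: fun_eq_iff outcome_def hist_eq_play)

lemma legal_strategy_eq_legal: "legal_strategy E d own i \<sigma> \<longleftrightarrow> legal (move E d own) (ctrl own) i \<sigma>"
  unfolding legal_strategy_def legal_def ..

lemma wins1_iff_winning: "wins1 E T d own s \<longleftrightarrow> winning (move E d own) (ctrl own) Pl1 (visits T) s"
  by (simp add: wins1_def winning_def legal_strategy_eq_legal outcome_eq_play)

lemma wins2_iff_winning:
  "wins2 E T d own s \<longleftrightarrow> winning (move E d own) (ctrl own) Pl2 (\<lambda>\<rho>. \<not> visits T \<rho>) s"
  by (simp add: wins2_def winning_def legal_strategy_eq_legal outcome_eq_play profile_Pl2)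

lemma ctrl_Grab [simp]: "ctrl own (Grab u A i) = opp i"
  by (cases i) simp_all

lemma move_exists:
  assumes "pawn_game V E T d own" and "token s \<in> V"
  shows "\<exists>t. move E d own s t"
proof (cases s)
  case (Conf u A)
  with assms obtain u' where "(u, u') \<in> E" unfolding pawn_game_def by auto
  with Conf show ?thesis by auto
next
  case (Grab u A i)
  then show ?thesis by (cases i) auto
qed

section \<open>One extra pawn for Player 1\<close>

fun extra_pawn :: "'v set \<Rightarrow> nat \<Rightarrow> ('v \<Rightarrow> nat) \<Rightarrow> 'v pos \<Rightarrow> 'v pos \<Rightarrow> bool" where
  "extra_pawn V d own (Conf u A) (Conf u' S) \<longleftrightarrow> u' = u \<and> u \<in> V \<and> A \<subseteq> {1..d} \<and>
     (S = A \<or> (\<exists>x \<in> {1..d} - A. x \<noteq> own u \<and> S = insert x A))"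
| "extra_pawn V d own (Grab u A i) (Grab u' S i') \<longleftrightarrow> u' = u \<and> i' = i \<and> u \<in> V \<and> A \<subseteq> {1..d} \<and>
     (S = A \<or> (\<exists>x \<in> {1..d} - A. S = insert x A))"
| "extra_pawn V d own _ _ \<longleftrightarrow> False"

lemma extra_pawn_token: "extra_pawn V d own s s' \<Longrightarrow> token s = token s'"
  by (cases s; cases s') auto

lemma extra_pawn_ctrl: "extra_pawn V d own s s' \<Longrightarrow> ctrl own s = ctrl own s'"
  by (cases s; cases s') auto

lemma extra_pawn_live:
  assumes "pawn_game V E T d own" and "extra_pawn V d own s s'"
  shows "(\<exists>t. move E d own s t) \<and> (\<exists>t'. move E d own s' t')"
proof -
  have "token s \<in> V" using assms(2) by (cases s; cases s') auto
  then show ?thesis using assms move_exists extra_pawn_token by metis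
qed

lemma extra_pawn_Conf_insert:
  "u \<in> V \<Longrightarrow> A \<subseteq> {1..d} \<Longrightarrow> x \<in> {1..d} \<Longrightarrow> x \<noteq> own u \<Longrightarrow>
    extra_pawn V d own (Conf u A) (Conf u (insert x A))"
  by (cases "x \<in> A") (auto simp: insert_absorb)

lemma extra_pawn_Conf_remove:
  "u \<in> V \<Longrightarrow> A \<subseteq> {1..d} \<Longrightarrow> x \<noteq> own u \<Longrightarrow> extra_pawn V d own (Conf u (A - {x})) (Conf u A)"
  using extra_pawn_Conf_insert[of u V "A - {x}" d x own] by (cases "x \<in> A") (auto simp: insert_absorb)

lemma extra_pawn_Conf_match:
  assumes "pawn_game V E T d own" and "extra_pawn V d own (Conf u A) s'"
  shows "move E d own s' t' \<Longrightarrow> \<exists>t. move E d own (Conf u A) t \<and> extra_pawn V d own t t'"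
    and "move E d own (Conf u A) t \<Longrightarrow> \<exists>t'. move E d own s' t' \<and> extra_pawn V d own t t'"
proof -
  obtain S where s': "s' = Conf u S" and "own u \<in> S \<longleftrightarrow> own u \<in> A"
    using assms(2) by (cases s') auto
  moreover have "u' \<in> V" if "(u, u') \<in> E" for u'
    using assms(1) that unfolding pawn_game_def by auto
  ultimately have "extra_pawn V d own (Grab u' A (if own u \<in> A then Pl1 else Pl2))
      (Grab u' S (if own u \<in> S then Pl1 else Pl2))" if "(u, u') \<in> E" for u'
    using assms(2) that by auto
  with s' show "move E d own s' t' \<Longrightarrow> \<exists>t. move E d own (Conf u A) t \<and> extra_pawn V d own t t'"
    and "move E d own (Conf u A) t \<Longrightarrow> \<exists>t'. move E d own s' t' \<and> extra_pawn V d own t t'"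
    by auto
qed

lemma extra_pawn_Grab_cases:
  assumes "extra_pawn V d own (Grab u A i) (Grab u S i)"
  obtains "S = A"
  | "own u \<in> {1..d} - A" and "S = insert (own u) A"
  | x where "x \<in> {1..d} - A" and "x \<noteq> own u" and "S = insert x A"
proof -
  from assms have "S = A \<or> (\<exists>x \<in> {1..d} - A. S = insert x A)" by simp
  then show ?thesis using that by blast
qed

lemma extra_pawn_match_Pl1:
  assumes game: "pawn_game V E T d own" and R: "extra_pawn V d own s s'"
    and "ctrl own s = Pl1" and m: "move E d own s' t'"
  shows "\<exists>t. move E d own s t \<and> extra_pawn V d own t t'"
proof (cases s)
  case (Conf u A)
  with extra_pawn_Conf_match(1)[OF game] R m show ?thesis by simp
next
  case (Grab u A i)
  with assms obtain S where s: "s = Grab u A Pl2" and s': "s' = Grab u S Pl2"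
    by (cases i; cases s') auto
  with R m obtain S' where t': "t' = Conf u S'" and "u \<in> V" "A \<subseteq> {1..d}"
    and S': "S' = S \<or> (\<exists>k \<in> {1..d} - S. S' = insert k S)"
    by auto
  have move: "move E d own s (Conf u B) \<longleftrightarrow> B = A \<or> (\<exists>k \<in> {1..d} - A. B = insert k A)" for B
    using s by auto
  from R[unfolded s s'] show ?thesis
  proof (cases rule: extra_pawn_Grab_cases)
    case 1
    with S' t' \<open>u \<in> V\<close> \<open>A \<subseteq> {1..d}\<close> have "move E d own s t'" and "extra_pawn V d own t' t'"
      by (auto simp: move)
    then show ?thesis by blast
  next
    case 2
    then have "move E d own s (Conf u S)" using move by auto
    moreover have "extra_pawn V d own (Conf u S) t'"
      using S' t' 2 \<open>u \<in> V\<close> \<open>A \<subseteq> {1..d}\<close> by (auto intro: extra_pawn_Conf_insert)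
    ultimately show ?thesis by blast
  next
    case (3 x)
    have t'_eq: "t' = Conf u (insert x (S' - {x}))" using S' t' 3 by auto
    have "move E d own s (Conf u (S' - {x}))" using 3 S' move by auto
    moreover have "extra_pawn V d own (Conf u (S' - {x})) t'"
      unfolding t'_eq by (rule extra_pawn_Conf_insert) (use S' 3 \<open>u \<in> V\<close> \<open>A \<subseteq> {1..d}\<close> in auto)
    ultimately show ?thesis by blast
  qed
qed

lemma extra_pawn_match_Pl2:
  assumes game: "pawn_game V E T d own" and R: "extra_pawn V d own s s'"
    and "ctrl own s = Pl2" and m: "move E d own s t"
  shows "\<exists>t'. move E d own s' t' \<and> extra_pawn V d own t t'"
proof (cases s)
  case (Conf u A)
  with extra_pawn_Conf_match(2)[OF game] R m show ?thesis by simp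
next
  case (Grab u A i)
  with assms obtain S where s: "s = Grab u A Pl1" and s': "s' = Grab u S Pl1"
    by (cases i; cases s') auto
  with R m obtain A' where t: "t = Conf u A'" and "u \<in> V" "A \<subseteq> {1..d}"
    and A': "A' = A \<or> (\<exists>k \<in> A. A' = A - {k})"
    by auto
  have move: "move E d own s' (Conf u B) \<longleftrightarrow> B = S \<or> (\<exists>k \<in> S. B = S - {k})" for B
    using s' by auto
  from R[unfolded s s'] show ?thesis
  proof (cases rule: extra_pawn_Grab_cases)
    case 1
    with A' t \<open>u \<in> V\<close> \<open>A \<subseteq> {1..d}\<close> have "move E d own s' t" and "extra_pawn V d own t t"
      by (auto simp: move)
    then show ?thesis by blast
  next
    case 2
    then have "move E d own s' (Conf u A)" using move by auto
    moreover have "extra_pawn V d own t (Conf u A)"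
      using A'
    proof (elim disjE bexE)
      fix k assume k: "k \<in> A" "A' = A - {k}"
      have "extra_pawn V d own (Conf u (A - {k})) (Conf u (insert k (A - {k})))"
        by (rule extra_pawn_Conf_insert) (use k(1) 2(1) \<open>u \<in> V\<close> \<open>A \<subseteq> {1..d}\<close> in auto)
      then show ?thesis using t k by (simp add: insert_absorb)
    qed (use t \<open>u \<in> V\<close> \<open>A \<subseteq> {1..d}\<close> in simp)
    ultimately show ?thesis by blast
  next
    case (3 x)
    then have "move E d own s' (Conf u (insert x A'))" using A' move by auto
    moreover have "extra_pawn V d own t (Conf u (insert x A'))"
      unfolding t by (rule extra_pawn_Conf_insert) (use A' 3 \<open>u \<in> V\<close> \<open>A \<subseteq> {1..d}\<close> in auto)
    ultimately show ?thesis by blast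
  qed
qed

lemma alternating_simulation_extra_pawn:
  assumes game: "pawn_game V E T d own"
  shows "alternating_simulation (move E d own) (ctrl own) Pl1 (extra_pawn V d own)"
    and "alternating_simulation (move E d own) (ctrl own) Pl2 (extra_pawn V d own)\<inverse>\<inverse>"
proof -
  have Pl2_if: "i \<noteq> Pl1 \<Longrightarrow> i = Pl2" and Pl1_if: "i \<noteq> Pl2 \<Longrightarrow> i = Pl1" for i
    by (cases i; simp)+
  show "alternating_simulation (move E d own) (ctrl own) Pl1 (extra_pawn V d own)"
  proof
    fix s s' t t' assume R: "extra_pawn V d own s s'"
    show "ctrl own s = ctrl own s'" by (rule extra_pawn_ctrl[OF R])
    show "(\<exists>t. move E d own s t) \<and> (\<exists>t'. move E d own s' t')" by (rule extra_pawn_live[OF game R])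
    show "\<exists>t. move E d own s t \<and> extra_pawn V d own t t'"
      if "ctrl own s = Pl1" and "move E d own s' t'"
      using extra_pawn_match_Pl1[OF game R that] .
    show "\<exists>t'. move E d own s' t' \<and> extra_pawn V d own t t'"
      if "ctrl own s \<noteq> Pl1" and "move E d own s t"
      using extra_pawn_match_Pl2[OF game R Pl2_if that(2)] that(1) .
  qed
  show "alternating_simulation (move E d own) (ctrl own) Pl2 (extra_pawn V d own)\<inverse>\<inverse>"
  proof
    fix s s' t t' assume "(extra_pawn V d own)\<inverse>\<inverse> s s'"
    then have R: "extra_pawn V d own s' s" by simp
    show "ctrl own s = ctrl own s'" using extra_pawn_ctrl[OF R] by simp
    show "(\<exists>t. move E d own s t) \<and> (\<exists>t'. move E d own s' t')" using extra_pawn_live[OF game R] by simp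
    show "\<exists>t. move E d own s t \<and> (extra_pawn V d own)\<inverse>\<inverse> t t'"
      if "ctrl own s = Pl2" and "move E d own s' t'"
      using extra_pawn_match_Pl2[OF game R _ that(2)] that(1) extra_pawn_ctrl[OF R] by simp
    show "\<exists>t'. move E d own s' t' \<and> (extra_pawn V d own)\<inverse>\<inverse> t t'"
      if "ctrl own s \<noteq> Pl2" and "move E d own s t"
      using extra_pawn_match_Pl1[OF game R _ that(2)] Pl1_if[OF that(1)] extra_pawn_ctrl[OF R] by simp
  qed
qed

lemma visits_extra_pawn:
  assumes "\<forall>n. extra_pawn V d own (\<rho> n) (\<rho>' n)"
  shows "visits T \<rho> \<longleftrightarrow> visits T \<rho>'"
proof -
  have "token (\<rho> n) = token (\<rho>' n)" for n
    using assms extra_pawn_token by blast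
  then show ?thesis by (simp add: visits_def)
qed

theorem corollary6:
  fixes V :: "'v set" and E :: "('v \<times> 'v) set" and T :: "'v set"
    and d :: nat and own :: "'v \<Rightarrow> nat" and v :: 'v and P :: "nat set" and j' :: nat
  assumes "pawn_game V E T d own"
    and "v \<in> V"
    and "P \<subseteq> {1..d}"
    and "j' \<in> {1..d}"
    and "j' \<noteq> own v"
  shows "(wins1 E T d own (Conf v (P \<union> {j'})) \<longrightarrow> wins1 E T d own (Conf v P))
       \<and> (wins2 E T d own (Conf v (P - {j'})) \<longrightarrow> wins2 E T d own (Conf v P))"
proof (intro conjI impI)
  interpret Pl1: alternating_simulation "move E d own" "ctrl own" Pl1 "extra_pawn V d own"
    using alternating_simulation_extra_pawn(1)[OF assms(1)] .
  assume "wins1 E T d own (Conf v (P \<union> {j'}))"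
  then show "wins1 E T d own (Conf v P)"
    unfolding wins1_iff_winning
  proof (rule Pl1.winning_transfer[rotated 2])
    show "extra_pawn V d own (Conf v P) (Conf v (P \<union> {j'}))"
      using extra_pawn_Conf_insert[of v V P d j' own] assms(2-5) by simp
    show "visits T \<rho>" if "\<forall>n. extra_pawn V d own (\<rho> n) (\<rho>' n)" and "visits T \<rho>'" for \<rho> \<rho>'
      using visits_extra_pawn[OF that(1)] that(2) by blast
  qed
next
  interpret Pl2: alternating_simulation "move E d own" "ctrl own" Pl2 "(extra_pawn V d own)\<inverse>\<inverse>"
    using alternating_simulation_extra_pawn(2)[OF assms(1)] .
  assume "wins2 E T d own (Conf v (P - {j'}))"
  then show "wins2 E T d own (Conf v P)"
    unfolding wins2_iff_winning
  proof (rule Pl2.winning_transfer[rotated 2])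
    show "(extra_pawn V d own)\<inverse>\<inverse> (Conf v P) (Conf v (P - {j'}))"
      using extra_pawn_Conf_remove[of v V P d j' own] assms(2,3,5) by simp
    show "\<not> visits T \<rho>" if "\<forall>n. (extra_pawn V d own)\<inverse>\<inverse> (\<rho> n) (\<rho>' n)" and "\<not> visits T \<rho>'"
      for \<rho> \<rho>'
      using visits_extra_pawn[of V d own \<rho>' \<rho>] that by simp
  qed
qed

end
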